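(* Let $\Theta\subset\mathbb{R}$ be a finite set of states, $\pi$ a probability distribution on $\Theta$ (Alice's prior) and $\widetilde\pi$ a probability distribution on $\Theta$ (Carroll's prior). Then Carroll is monotonic-optimistic if and only if $\widetilde\pi$ is a monotonic strengthening of $\pi$. Moreover, these are also equivalent to each of the following statements: (i) $\widetilde\pi\ge_{\mathrm{lr}}\pi$ on $\Theta$; (ii) $\widetilde{\mathbb{P}}\ge_{\mathrm{lr}}\mathbb{P}$ on $S$ for every MLRP signaling structure $(S,\sigma)$; (iii) $(R,\widetilde{\mathbb{P}})\ge_{\mathrm{lr}}(R,\mathbb{P})$ for every MLRP signaling structure $(S,\sigma)$ and every increasing function $R:S\to\mathbb{R}$.
   Context: A signaling structure on $\Theta$ is a finite set $S\subset\mathbb{R}$ of signals with probabilities $\sigma(s\mid\theta)\ge0$, $\sum_{s\in S}\sigma(s\mid\theta)=1$ for each $\theta$. It has the monotone likelihood ratio property (MLRP) if $\sigma(s'\mid\theta)/\sigma(s\mid\theta)$ is (weakly) increasing in $\theta$ whenever $s'>s$. For a prior $\rho$, $\mathbb{P}_{\rho,\sigma}(\theta,s)=\rho(\theta)\sigma(s\mid\theta)$; write $\mathbb{P}=\mathbb{P}_{\pi,\sigma}$, $\widetilde{\mathbb{P}}=\mathbb{P}_{\widetilde\pi,\sigma}$ (and their marginals on $S$). For $\Gamma\subseteq\Theta$, Alice's posterior is $Q_\Gamma(s)=\mathbb{P}(\Gamma\mid s)$ (for $\mathbb{P}(s)>0$). For a function $R$ on $S$ and a probability $\mathbb{Q}$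 on $S$, $(R,\mathbb{Q})$ denotes the random variable taking value $R(s)$ with probability $\mathbb{Q}(s)$. $X\ge_{\mathrm{lr}}Y$ (likelihood ratio order) means $\mathbb{P}(X=v)/\mathbb{P}(Y=v)$ is weakly increasing in $v$ (equivalently $\mathbb{P}(X=u)\mathbb{P}(Y=v)\le\mathbb{P}(X=v)\mathbb{P}(Y=u)$ for $u<v$); for distributions on $\Theta$ or $S$ it is applied to the identity random variable. A set $\Gamma\subseteq\Theta$ is an upper set if $\theta\in\Gamma$, $\theta'\in\Theta$, $\theta'>\theta$ imply $\theta'\in\Gamma$. Carroll is monotonic-optimistic if $(Q_\Gamma,\widetilde{\mathbb{P}})\ge_{\mathrm{lr}}(Q_\Gamma,\mathbb{P})$ for every upper set $\Gamma\subseteq\Theta$ and every MLRP signaling structure $(S,\sigma)$. For a prior $\rho$ and $\Gamma$ with $\rho(\Gamma)>0$, a $\Gamma$-strengthening of $\rho$ is any $a\rho^\Gamma+(1-a)\rho$ with $a\in[0,1]$, where $\rho^\Gamma(\theta)=\rho(\theta\mid\Gamma)$. $\widetilde\pi$ is a monotonic strengthening of $\pi$ if it is obtained by a finite sequence of $\Gamma_i$-strengthenings starting from $\pi$ (each applied to the distribution obtained at the previous step), where all $\Gamma_i\subset\Theta$ are upper sets. Increasing means weakly increasing. *)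

theory Defs
  imports Main "HOL.Real"
begin

text \<open>States are reals in a finite set Th; distributions are functions real => real
  whose values matter only on Th. A signaling structure is a finite set S of reals
  together with sigma s theta, the probability of signal s in state theta.\<close>

definition prob_on :: "real set \<Rightarrow> (real \<Rightarrow> real) \<Rightarrow> bool" where
  "prob_on Th p \<longleftrightarrow> (\<forall>t\<in>Th. p t \<ge> 0) \<and> (\<Sum>t\<in>Th. p t) = 1"

definition signaling :: "real set \<Rightarrow> real set \<Rightarrow> (real \<Rightarrow> real \<Rightarrow> real) \<Rightarrow> bool" where
  "signaling Th S sigma \<longleftrightarrow> finite S \<and> (\<forall>s\<in>S. \<forall>t\<in>Th. sigma s t \<ge> 0)
     \<and> (\<forall>t\<in>Th. (\<Sum>s\<in>S. sigma s t) = 1)"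

text \<open>MLRP: sigma(s'|t)/sigma(s|t) weakly increasing in t for s' > s, in cross-multiplied form.\<close>
definition MLRP :: "real set \<Rightarrow> real set \<Rightarrow> (real \<Rightarrow> real \<Rightarrow> real) \<Rightarrow> bool" where
  "MLRP Th S sigma \<longleftrightarrow> (\<forall>s\<in>S. \<forall>s'\<in>S. \<forall>t\<in>Th. \<forall>t'\<in>Th. s < s' \<longrightarrow> t < t' \<longrightarrow>
       sigma s' t * sigma s t' \<le> sigma s' t' * sigma s t)"

definition sig_marg :: "real set \<Rightarrow> (real \<Rightarrow> real) \<Rightarrow> (real \<Rightarrow> real \<Rightarrow> real) \<Rightarrow> real \<Rightarrow> real" where
  "sig_marg Th rho sigma s = (\<Sum>t\<in>Th. rho t * sigma s t)"

definition posterior :: "real set \<Rightarrow> (real \<Rightarrow> real) \<Rightarrow> (real \<Rightarrow> real \<Rightarrow> real) \<Rightarrow> real set \<Rightarrow> real \<Rightarrow> real" where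
  "posterior Th p sigma G s = (\<Sum>t\<in>G. p t * sigma s t) / sig_marg Th p sigma s"

definition rv_pmf :: "real set \<Rightarrow> (real \<Rightarrow> real) \<Rightarrow> (real \<Rightarrow> real) \<Rightarrow> real \<Rightarrow> real" where
  "rv_pmf S R Q v = (\<Sum>s\<in>{s\<in>S. R s = v}. Q s)"

definition lr_ge_on :: "real set \<Rightarrow> (real \<Rightarrow> real) \<Rightarrow> (real \<Rightarrow> real) \<Rightarrow> bool" where
  "lr_ge_on A X Y \<longleftrightarrow> (\<forall>u\<in>A. \<forall>v\<in>A. u < v \<longrightarrow> X u * Y v \<le> X v * Y u)"

definition rv_lr_ge :: "real set \<Rightarrow> (real \<Rightarrow> real) \<Rightarrow> (real \<Rightarrow> real) \<Rightarrow> (real \<Rightarrow> real) \<Rightarrow> bool" where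
  "rv_lr_ge S R Q1 Q2 \<longleftrightarrow> lr_ge_on UNIV (rv_pmf S R Q1) (rv_pmf S R Q2)"

definition upper_set :: "real set \<Rightarrow> real set \<Rightarrow> bool" where
  "upper_set Th G \<longleftrightarrow> G \<subseteq> Th \<and> (\<forall>t\<in>G. \<forall>t'\<in>Th. t' > t \<longrightarrow> t' \<in> G)"

definition cond_on :: "(real \<Rightarrow> real) \<Rightarrow> real set \<Rightarrow> real \<Rightarrow> real" where
  "cond_on rho G t = (if t \<in> G then rho t / (\<Sum>u\<in>G. rho u) else 0)"

inductive mono_reach :: "real set \<Rightarrow> (real \<Rightarrow> real) \<Rightarrow> (real \<Rightarrow> real) \<Rightarrow> bool"
  for Th :: "real set" and p :: "real \<Rightarrow> real" where
  start: "mono_reach Th p p"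
| step: "mono_reach Th p rho \<Longrightarrow> upper_set Th G \<Longrightarrow> (\<Sum>u\<in>G. rho u) > 0 \<Longrightarrow>
         0 \<le> a \<Longrightarrow> a \<le> 1 \<Longrightarrow>
         mono_reach Th p (\<lambda>t. a * cond_on rho G t + (1 - a) * rho t)"

definition monotonic_strengthening :: "real set \<Rightarrow> (real \<Rightarrow> real) \<Rightarrow> (real \<Rightarrow> real) \<Rightarrow> bool" where
  "monotonic_strengthening Th p q \<longleftrightarrow> (\<exists>rho. mono_reach Th p rho \<and> (\<forall>t\<in>Th. q t = rho t))"

definition monotonic_optimistic :: "real set \<Rightarrow> (real \<Rightarrow> real) \<Rightarrow> (real \<Rightarrow> real) \<Rightarrow> bool" where
  "monotonic_optimistic Th p q \<longleftrightarrow>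
     (\<forall>G S sigma. upper_set Th G \<longrightarrow> signaling Th S sigma \<longrightarrow> MLRP Th S sigma \<longrightarrow>
        rv_lr_ge S (posterior Th p sigma G) (sig_marg Th q sigma) (sig_marg Th p sigma))"

definition increasing_on :: "real set \<Rightarrow> (real \<Rightarrow> real) \<Rightarrow> bool" where
  "increasing_on S R \<longleftrightarrow> (\<forall>s\<in>S. \<forall>s'\<in>S. s \<le> s' \<longrightarrow> R s \<le> R s')"

end

(*
  A Gamma-strengthening multiplies the prior by a nonnegative factor that is constant on the upper
  set Gamma and on its complement and larger on Gamma, and every such two-level reweighting is a
  Gamma-strengthening. So monotonic strengthenings keep the density q/p increasing, which is (i);
  conversely an increasing density is reached by splitting off two-level steps, one at a time, at
  its lowest jump.

  Given (i), an MLRP channel carries the likelihood-ratio order from states to signals, and so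
  does every map of the signals that is increasing on their support: the identity, any increasing
  R, and Alice's posterior of an upper set. This gives (ii), (iii) and optimism. Conversely, the
  identity channel turns (ii) into (i), and optimism yields (i) for each pair of consecutive states
  through a channel in which only these two states emit noisy signals.
*)
theory Submission
  imports Defs
begin

lemma sum_mult_sum_le:
  fixes a b c d :: "'a \<Rightarrow> real"
  assumes "\<And>x y. x \<in> X \<Longrightarrow> y \<in> Y \<Longrightarrow> a x * b y \<le> c x * d y"
  shows "sum a X * sum b Y \<le> sum c X * sum d Y"
  unfolding sum_product by (intro sum_mono) (use assms in auto)

lemma sum_sum_nonpos_if_symmetrized_nonpos:
  fixes D :: "'a \<Rightarrow> 'a \<Rightarrow> real"
  assumes "\<And>x y. x \<in> A \<Longrightarrow> y \<in> A \<Longrightarrow> D x y + D y x \<le> 0"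
  shows "(\<Sum>x\<in>A. \<Sum>y\<in>A. D x y) \<le> 0"
proof -
  have "2 * (\<Sum>x\<in>A. \<Sum>y\<in>A. D x y) = (\<Sum>x\<in>A. \<Sum>y\<in>A. D x y) + (\<Sum>x\<in>A. \<Sum>y\<in>A. D y x)"
    using sum.swap[of D A A] by simp
  also have "\<dots> = (\<Sum>x\<in>A. \<Sum>y\<in>A. D x y + D y x)"
    by (simp add: sum.distrib)
  also have "\<dots> \<le> 0"
    by (intro sum_nonpos) (use assms in auto)
  finally show ?thesis by simp
qed

lemma increasing_on_subset: "increasing_on A f \<Longrightarrow> B \<subseteq> A \<Longrightarrow> increasing_on B f"
  unfolding increasing_on_def by blast

lemma increasing_on_id: "increasing_on A id"
  unfolding increasing_on_def by simp

lemma increasing_on_if_consecutive: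
  fixes r :: "real \<Rightarrow> real"
  assumes "finite A"
    and consecutive: "\<And>u v. u \<in> A \<Longrightarrow> v \<in> A \<Longrightarrow> u < v \<Longrightarrow> \<forall>t\<in>A. \<not> (u < t \<and> t < v) \<Longrightarrow> r u \<le> r v"
  shows "increasing_on A r"
proof -
  have "r u \<le> r v" if "u \<in> A" "v \<in> A" "u < v" "card {t\<in>A. u < t \<and> t < v} = n" for n u v
    using that
  proof (induction n arbitrary: u v rule: less_induct)
    case (less n u v)
    show ?case
    proof (cases "\<forall>t\<in>A. \<not> (u < t \<and> t < v)")
      case True
      then show ?thesis using consecutive less.prems by blast
    next
      case False
      then obtain w where w: "w \<in> A" "u < w" "w < v" by auto
      have between_finite: "finite {t\<in>A. u < t \<and> t < v}" using \<open>finite A\<close> by simp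
      have "card {t\<in>A. u < t \<and> t < w} < n" "card {t\<in>A. w < t \<and> t < v} < n"
        unfolding less.prems(4)[symmetric] by (intro psubset_card_mono[OF between_finite]; use w in auto)+
      then have "r u \<le> r w" "r w \<le> r v"
        using less.IH less.prems w by blast+
      then show ?thesis by linarith
    qed
  qed
  then show ?thesis
    unfolding increasing_on_def by (metis order_le_less)
qed

lemma lr_ge_on_iff_increasing_ratio:
  assumes "\<forall>t\<in>A. p t > 0"
  shows "lr_ge_on A q p \<longleftrightarrow> increasing_on A (\<lambda>t. q t / p t)"
proof -
  have "q u * p v \<le> q v * p u \<longleftrightarrow> q u / p u \<le> q v / p v" if "u \<in> A" "v \<in> A" for u v
    using assms that by (simp add: divide_simps mult.commute)
  then show ?thesis
    unfolding lr_ge_on_def increasing_on_def by (metis order_le_less order_refl)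
qed

lemma lr_ge_on_mult_increasing:
  assumes "lr_ge_on A q p" and "increasing_on A c"
    and "\<forall>t\<in>A. c t \<ge> 0" "\<forall>t\<in>A. q t \<ge> 0" "\<forall>t\<in>A. p t \<ge> 0"
  shows "lr_ge_on A (\<lambda>t. c t * q t) p"
  unfolding lr_ge_on_def
proof (intro ballI impI)
  fix u v assume uv: "u \<in> A" "v \<in> A" "u < v"
  have "c u * (q u * p v) \<le> c u * (q v * p u)"
    using assms(1,3) uv unfolding lr_ge_on_def by (simp add: mult_left_mono)
  also have "\<dots> \<le> c v * (q v * p u)"
    using assms(2,4,5) uv unfolding increasing_on_def by (simp add: mult_right_mono)
  finally show "c u * q u * p v \<le> c v * q v * p u" by (simp add: mult.assoc)
qed

lemma strengthening_eq_mult: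
  "a * cond_on rho G t + (1 - a) * rho t = (if t \<in> G then a / sum rho G + (1 - a) else 1 - a) * rho t"
  unfolding cond_on_def by (simp add: field_simps)

lemma strengthening_factor_increasing:
  assumes "upper_set Th G" "0 \<le> a" "sum rho G > 0"
  shows "increasing_on Th (\<lambda>t. if t \<in> G then a / sum rho G + (1 - a) else 1 - a)"
  using assms unfolding increasing_on_def upper_set_def by (auto simp: order_le_less)

lemma mono_reach_prob_on:
  assumes "finite Th" "prob_on Th p" "mono_reach Th p rho"
  shows "prob_on Th rho"
  using assms(3)
proof induction
  case start
  show ?case using assms(2) .
next
  case (step rho G a)
  have "G \<subseteq> Th" using step.hyps(2) unfolding upper_set_def by blast
  then have "(\<Sum>t\<in>Th. cond_on rho G t) = 1"
    unfolding cond_on_def using step.hyps(3) assms(1)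
    by (simp add: sum.inter_restrict[symmetric] Int_absorb1 sum_divide_distrib[symmetric])
  then have "(\<Sum>t\<in>Th. a * cond_on rho G t + (1 - a) * rho t) = 1"
    using step.IH unfolding prob_on_def by (simp add: sum.distrib sum_distrib_left[symmetric])
  moreover have "a * cond_on rho G t + (1 - a) * rho t \<ge> 0" if "t \<in> Th" for t
    using step that unfolding strengthening_eq_mult prob_on_def by simp
  ultimately show ?case unfolding prob_on_def by blast
qed

lemma mono_reach_lr_ge:
  assumes "finite Th" "prob_on Th p" "mono_reach Th p rho"
  shows "lr_ge_on Th rho p"
  using assms(3)
proof induction
  case start
  show ?case unfolding lr_ge_on_def by (simp add: mult.commute)
next
  case (step rho G a)
  have "prob_on Th rho" using mono_reach_prob_on[OF assms(1,2) step.hyps(1)] .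
  then show ?case
    unfolding strengthening_eq_mult
    using step assms(2) strengthening_factor_increasing[OF step.hyps(2,4,3)]
    by (intro lr_ge_on_mult_increasing) (auto simp: prob_on_def)
qed

lemma monotonic_strengthening_cong:
  "monotonic_strengthening Th p q \<Longrightarrow> \<forall>t\<in>Th. q' t = q t \<Longrightarrow> monotonic_strengthening Th p q'"
  unfolding monotonic_strengthening_def by auto

lemma monotonic_strengthening_two_level:
  assumes "finite Th" "mono_reach Th p rho" "prob_on Th rho"
    and G: "upper_set Th G" "sum rho G > 0"
    and c: "0 \<le> c0" "c0 \<le> c1"
    and normalized: "(\<Sum>t\<in>Th. (if t \<in> G then c1 else c0) * rho t) = 1"
  shows "monotonic_strengthening Th p (\<lambda>t. (if t \<in> G then c1 else c0) * rho t)"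
proof -
  have "G \<subseteq> Th" using G(1) unfolding upper_set_def by blast
  then have "(\<Sum>t\<in>Th. (if t \<in> G then c1 else c0) * rho t)
      = (\<Sum>t\<in>G. c1 * rho t) + (\<Sum>t\<in>Th - G. c0 * rho t)"
    using assms(1) sum.If_cases[of Th "\<lambda>t. t \<in> G" "\<lambda>t. c1 * rho t" "\<lambda>t. c0 * rho t"]
    by (simp add: Int_absorb1 Diff_eq if_distrib if_distribR)
  also have "\<dots> = c1 * sum rho G + c0 * (1 - sum rho G)"
    using assms(1,3) \<open>G \<subseteq> Th\<close> sum.subset_diff[of G Th rho]
    by (simp add: sum_distrib_left[symmetric] prob_on_def)
  finally have E: "c1 * sum rho G + c0 * (1 - sum rho G) = 1" using normalized by simp
  have "c0 * sum rho G \<le> c1 * sum rho G" using c G(2) by (simp add: mult_right_mono)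
  with E have "c0 \<le> 1" by (simp add: algebra_simps)
  with c have a: "0 \<le> 1 - c0" "1 - c0 \<le> 1" by auto
  have "c1 = (1 - c0) / sum rho G + c0"
    using E G(2) by (simp add: field_simps)
  then have "(\<lambda>t. (1 - c0) * cond_on rho G t + (1 - (1 - c0)) * rho t)
      = (\<lambda>t. (if t \<in> G then c1 else c0) * rho t)"
    unfolding strengthening_eq_mult by (simp add: fun_eq_iff)
  with mono_reach.step[OF assms(2) G a]
  have "mono_reach Th p (\<lambda>t. (if t \<in> G then c1 else c0) * rho t)" by simp
  then show ?thesis unfolding monotonic_strengthening_def by blast
qed

lemma monotonic_strengthening_two_level_normalized:
  assumes "finite Th" "mono_reach Th p rho" "prob_on Th rho"
    and G: "upper_set Th G" "sum rho G > 0"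
    and c: "0 \<le> c0" "c0 \<le> c1" "0 < c1"
  defines "Z \<equiv> \<Sum>t\<in>Th. (if t \<in> G then c1 else c0) * rho t"
  shows "Z > 0"
    and "monotonic_strengthening Th p (\<lambda>t. (if t \<in> G then c1 / Z else c0 / Z) * rho t)"
proof -
  have "G \<subseteq> Th" using G(1) unfolding upper_set_def by blast
  have "c1 * sum rho G = (\<Sum>t\<in>G. (if t \<in> G then c1 else c0) * rho t)"
    by (simp add: sum_distrib_left)
  also have "\<dots> \<le> Z"
    unfolding Z_def using assms(1,3) \<open>G \<subseteq> Th\<close> c(1)
    by (intro sum_mono2) (auto simp: prob_on_def)
  finally show "Z > 0" using mult_pos_pos[OF c(3) G(2)] by linarith
  have "(\<Sum>t\<in>Th. (if t \<in> G then c1 / Z else c0 / Z) * rho t) = Z / Z"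
    unfolding Z_def sum_divide_distrib by (intro sum.cong) auto
  with \<open>Z > 0\<close> c show "monotonic_strengthening Th p (\<lambda>t. (if t \<in> G then c1 / Z else c0 / Z) * rho t)"
    by (intro monotonic_strengthening_two_level[OF assms(1-3) G]) (auto simp: divide_right_mono)
qed

lemma increasing_on_factor_lowest_jump:
  fixes f :: "real \<Rightarrow> real"
  assumes "finite Th" "increasing_on Th f" "\<forall>t\<in>Th. f t \<ge> 0"
    and m: "m \<in> Th" "\<forall>t\<in>Th. m \<le> t"
    and G: "G = {t\<in>Th. f m < f t}" "G \<noteq> {}"
  defines "c \<equiv> Min (f ` G)"
  shows "f m < c"
    and "increasing_on Th (\<lambda>t. if t \<in> G then f t / c else 1)"
    and "card {t\<in>Th. 1 < (if t \<in> G then f t / c else 1)} < card G"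
proof -
  have "finite G" using assms(1) G(1) by simp
  then have c_le: "\<forall>t\<in>G. c \<le> f t" unfolding c_def by simp
  have "c \<in> f ` G" using \<open>finite G\<close> G(2) unfolding c_def by simp
  then obtain t0 where t0: "t0 \<in> G" "f t0 = c" by auto
  then show "f m < c" using G(1) by simp
  then have "c > 0" using assms(3) m(1) by fastforce
  have upper: "t' \<in> G" if "t \<in> G" "t' \<in> Th" "t \<le> t'" for t t'
    using assms(2) that G(1) unfolding increasing_on_def by fastforce
  show "increasing_on Th (\<lambda>t. if t \<in> G then f t / c else 1)"
    unfolding increasing_on_def
  proof (intro ballI impI)
    fix t t' assume tt: "t \<in> Th" "t' \<in> Th" "t \<le> t'"
    have "f t \<le> f t'" using assms(2) tt unfolding increasing_on_def by blast
    then show "(if t \<in> G then f t / c else 1) \<le> (if t' \<in> G then f t' / c else 1)"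
      using upper[OF _ tt(2,3)] c_le \<open>c > 0\<close> by (auto simp: divide_right_mono)
  qed
  have "{t\<in>Th. 1 < (if t \<in> G then f t / c else 1)} \<subset> G"
    using t0 \<open>c > 0\<close> G(1) by (auto simp: field_simps)
  then show "card {t\<in>Th. 1 < (if t \<in> G then f t / c else 1)} < card G"
    using \<open>finite G\<close> by (rule psubset_card_mono[rotated])
qed

lemma monotonic_strengthening_if_factor_flat:
  assumes "mono_reach Th p rho" "prob_on Th rho"
    and "\<forall>t\<in>Th. rho t = 0 \<or> f t = c" "(\<Sum>t\<in>Th. f t * rho t) = 1"
  shows "monotonic_strengthening Th p (\<lambda>t. f t * rho t)"
proof -
  have flat: "\<forall>t\<in>Th. f t * rho t = c * rho t" using assms(3) by auto
  then have "(\<Sum>t\<in>Th. f t * rho t) = c * sum rho Th"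
    unfolding sum_distrib_left by (intro sum.cong) auto
  then have "c = 1" using assms(2,4) unfolding prob_on_def by simp
  then show ?thesis using flat assms(1) unfolding monotonic_strengthening_def by auto
qed

lemma mono_reach_peel_lowest_jump:
  assumes "finite Th" "mono_reach Th p rho" "prob_on Th rho"
    and f: "\<forall>t\<in>Th. f t \<ge> 0" "increasing_on Th f"
    and m: "m \<in> Th" "\<forall>t\<in>Th. m \<le> t"
    and G: "G = {t\<in>Th. f m < f t}" "sum rho G > 0"
  obtains rho' g where "mono_reach Th p rho'" "\<forall>t\<in>Th. g t * rho' t = f t * rho t"
    "\<forall>t\<in>Th. g t \<ge> 0" "increasing_on Th g" "card {t\<in>Th. g m < g t} < card G"
proof -
  have "G \<noteq> {}" using G(2) by auto
  define c where "c = Min (f ` G)"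
  note jump = increasing_on_factor_lowest_jump[OF assms(1) f(2,1) m G(1) \<open>G \<noteq> {}\<close>, folded c_def]
  have "c > 0" using jump(1) f(1) m(1) by fastforce
  have "upper_set Th G"
    using f(2) G(1) unfolding upper_set_def increasing_on_def by force
  note step = monotonic_strengthening_two_level_normalized[OF assms(1-3) this G(2) _ _ \<open>c > 0\<close>,
      of "f m"]
  define Z where "Z = (\<Sum>t\<in>Th. (if t \<in> G then c else f m) * rho t)"
  have "Z > 0" using step(1) f(1) m(1) jump(1) unfolding Z_def by simp
  obtain rho' where rho': "mono_reach Th p rho'"
    "\<forall>t\<in>Th. rho' t = (if t \<in> G then c / Z else f m / Z) * rho t"
    using step(2) f(1) m(1) jump(1) unfolding monotonic_strengthening_def Z_def by auto
  define g where "g t = Z * (if t \<in> G then f t / c else 1)" for t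
  show thesis
  proof
    show "mono_reach Th p rho'" using rho'(1) .
    have "f t = f m" if "t \<in> Th" "t \<notin> G" for t
      using f(2) m that G(1) unfolding increasing_on_def by force
    then show "\<forall>t\<in>Th. g t * rho' t = f t * rho t"
      using rho'(2) \<open>Z > 0\<close> \<open>c > 0\<close> unfolding g_def by auto
    show "\<forall>t\<in>Th. g t \<ge> 0"
      using f(1) \<open>Z > 0\<close> \<open>c > 0\<close> unfolding g_def by simp
    show "increasing_on Th g"
      using jump(2) \<open>Z > 0\<close> unfolding g_def increasing_on_def by (simp add: mult_left_mono)
    have "{t\<in>Th. g m < g t} = {t\<in>Th. 1 < (if t \<in> G then f t / c else 1)}"
      using \<open>Z > 0\<close> m(1) G(1) unfolding g_def by auto
    then show "card {t\<in>Th. g m < g t} < card G" using jump(3) by simp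
  qed
qed

lemma monotonic_strengthening_increasing_factor:
  assumes "finite Th" "prob_on Th p"
    and "mono_reach Th p rho" "\<forall>t\<in>Th. f t \<ge> 0" "increasing_on Th f"
    and "(\<Sum>t\<in>Th. f t * rho t) = 1"
  shows "monotonic_strengthening Th p (\<lambda>t. f t * rho t)"
  using assms(3-)
proof (induction "card {t\<in>Th. f (Min Th) < f t}" arbitrary: f rho rule: less_induct)
  case less
  define G where "G = {t\<in>Th. f (Min Th) < f t}"
  have "Th \<noteq> {}" using assms(2) unfolding prob_on_def by auto
  then have m: "Min Th \<in> Th" "\<forall>t\<in>Th. Min Th \<le> t" using assms(1) by auto
  have rho: "prob_on Th rho" using mono_reach_prob_on[OF assms(1,2) less.prems(1)] .
  show ?case
  proof (cases "sum rho G = 0")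
    case True
    have "G \<subseteq> Th" "finite G" using assms(1) unfolding G_def by auto
    with True rho have "\<forall>t\<in>G. rho t = 0"
      using sum_nonneg_eq_0_iff unfolding prob_on_def by blast
    moreover have "f t = f (Min Th)" if "t \<in> Th" "t \<notin> G" for t
      using less.prems(3) m that unfolding G_def increasing_on_def by force
    ultimately show ?thesis
      using monotonic_strengthening_if_factor_flat[OF less.prems(1) rho _ less.prems(4)] by blast
  next
    case False
    then have "sum rho G > 0"
      using rho sum_nonneg[of G rho] unfolding prob_on_def G_def by fastforce
    then obtain rho' g where "mono_reach Th p rho'" and factor: "\<forall>t\<in>Th. g t * rho' t = f t * rho t"
      and "\<forall>t\<in>Th. g t \<ge> 0" "increasing_on Th g" "card {t\<in>Th. g (Min Th) < g t} < card G"
      using mono_reach_peel_lowest_jump[OF assms(1) less.prems(1) rho less.prems(2,3) m G_def] by blast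
    then have "monotonic_strengthening Th p (\<lambda>t. g t * rho' t)"
      using less.hyps less.prems(4) unfolding G_def by simp
    then show ?thesis
      by (rule monotonic_strengthening_cong) (use factor in simp)
  qed
qed

lemma monotonic_strengthening_iff_lr_ge:
  assumes "finite Th" "prob_on Th p" "prob_on Th q" "\<forall>t\<in>Th. p t > 0"
  shows "monotonic_strengthening Th p q \<longleftrightarrow> lr_ge_on Th q p"
proof
  assume "monotonic_strengthening Th p q"
  then obtain rho where "mono_reach Th p rho" "\<forall>t\<in>Th. q t = rho t"
    unfolding monotonic_strengthening_def by blast
  with mono_reach_lr_ge[OF assms(1,2)] show "lr_ge_on Th q p"
    unfolding lr_ge_on_def by auto
next
  assume "lr_ge_on Th q p"
  then have "increasing_on Th (\<lambda>t. q t / p t)"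
    using lr_ge_on_iff_increasing_ratio assms(4) by blast
  moreover have "\<forall>t\<in>Th. q t / p t * p t = q t" using assms(4) by force
  moreover have "\<forall>t\<in>Th. q t / p t \<ge> 0" using assms(3,4) unfolding prob_on_def by (auto intro: divide_nonneg_pos)
  ultimately show "monotonic_strengthening Th p q"
    using monotonic_strengthening_increasing_factor[OF assms(1,2) mono_reach.start, of "\<lambda>t. q t / p t"]
      monotonic_strengthening_cong assms(3) unfolding prob_on_def by (simp cong: sum.cong)
qed

lemma MLRP_lr_ge_sig_marg:
  assumes lr: "lr_ge_on Th q p" and mlrp: "MLRP Th S sigma"
  shows "lr_ge_on S (sig_marg Th q sigma) (sig_marg Th p sigma)"
  unfolding lr_ge_on_def
proof (intro ballI impI)
  fix s s' assume s: "s \<in> S" "s' \<in> S" "s < s'"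
  define D where "D t t' = q t * sigma s t * (p t' * sigma s' t') - q t' * sigma s' t' * (p t * sigma s t)"
    for t t'
  \<comment> \<open>D t t' + D t' t factors as E t t'.\<close>
  define E where "E t t' = (q t * p t' - q t' * p t) * (sigma s t * sigma s' t' - sigma s t' * sigma s' t)"
    for t t'
  have E_ordered: "E t t' \<le> 0" if "t \<in> Th" "t' \<in> Th" "t < t'" for t t'
  proof -
    have "q t * p t' - q t' * p t \<le> 0" using lr that unfolding lr_ge_on_def by auto
    moreover have "sigma s t * sigma s' t' - sigma s t' * sigma s' t \<ge> 0"
      using mlrp that s unfolding MLRP_def by (auto simp: mult.commute)
    ultimately show ?thesis unfolding E_def by (rule mult_nonpos_nonneg)
  qed
  have E_sym: "E t t' = E t' t" and E_diag: "E t t = 0" for t t'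
    unfolding E_def by (simp_all add: algebra_simps)
  have "(\<Sum>t\<in>Th. \<Sum>t'\<in>Th. D t t') \<le> 0"
  proof (rule sum_sum_nonpos_if_symmetrized_nonpos)
    fix t t' assume "t \<in> Th" "t' \<in> Th"
    then have "E t t' \<le> 0"
      using E_ordered[of t t'] E_ordered[of t' t] E_sym[of t t'] E_diag[of t]
      by (cases t t' rule: linorder_cases) auto
    then show "D t t' + D t' t \<le> 0" unfolding D_def E_def by (simp add: algebra_simps)
  qed
  moreover have "sig_marg Th q sigma s' * sig_marg Th p sigma s
      = (\<Sum>t\<in>Th. \<Sum>t'\<in>Th. q t' * sigma s' t' * (p t * sigma s t))"
    unfolding sig_marg_def sum_product by (rule sum.swap)
  then have "(\<Sum>t\<in>Th. \<Sum>t'\<in>Th. D t t')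
      = sig_marg Th q sigma s * sig_marg Th p sigma s' - sig_marg Th q sigma s' * sig_marg Th p sigma s"
    unfolding D_def sum_subtractf by (simp add: sig_marg_def sum_product)
  ultimately show "sig_marg Th q sigma s * sig_marg Th p sigma s' \<le> sig_marg Th q sigma s' * sig_marg Th p sigma s"
    by simp
qed

lemma rv_lr_ge_if_increasing_on_support:
  assumes "finite S" and lr: "lr_ge_on S Q1 Q2" and null: "\<forall>s\<in>S. Q2 s = 0 \<longrightarrow> Q1 s = 0"
    and R: "increasing_on {s\<in>S. Q2 s \<noteq> 0} R"
  shows "rv_lr_ge S R Q1 Q2"
  unfolding rv_lr_ge_def lr_ge_on_def rv_pmf_def
proof (intro ballI impI)
  fix u v :: real assume "u < v"
  have "Q1 s * Q2 s' \<le> Q2 s * Q1 s'" if "s \<in> S" "R s = u" "s' \<in> S" "R s' = v" for s s'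
  proof (cases "Q2 s = 0 \<or> Q2 s' = 0")
    case True
    then show ?thesis using null that by auto
  next
    case False
    then have "s < s'"
      using R that \<open>u < v\<close> unfolding increasing_on_def by (metis (mono_tags) linorder_not_le mem_Collect_eq)
    then show ?thesis using lr that unfolding lr_ge_on_def by (simp add: mult.commute)
  qed
  then have "sum Q1 {s\<in>S. R s = u} * sum Q2 {s\<in>S. R s = v} \<le> sum Q2 {s\<in>S. R s = u} * sum Q1 {s\<in>S. R s = v}"
    by (intro sum_mult_sum_le) auto
  then show "sum Q1 {s\<in>S. R s = u} * sum Q2 {s\<in>S. R s = v} \<le> sum Q1 {s\<in>S. R s = v} * sum Q2 {s\<in>S. R s = u}"
    by (simp add: mult.commute)
qed

lemma rv_lr_ge_singleton_levels:
  assumes "rv_lr_ge S R Q1 Q2" "s \<in> S" "s' \<in> S" "R s < R s'"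
    and "\<forall>t\<in>S. R t = R s \<longrightarrow> t = s" "\<forall>t\<in>S. R t = R s' \<longrightarrow> t = s'"
  shows "Q1 s * Q2 s' \<le> Q1 s' * Q2 s"
proof -
  have "{t\<in>S. R t = R s} = {s}" "{t\<in>S. R t = R s'} = {s'}" using assms(2-) by auto
  then show ?thesis using assms(1,4) unfolding rv_lr_ge_def lr_ge_on_def rv_pmf_def by force
qed

lemma sig_marg_nonneg:
  "\<forall>t\<in>Th. p t \<ge> 0 \<Longrightarrow> signaling Th S sigma \<Longrightarrow> s \<in> S \<Longrightarrow> sig_marg Th p sigma s \<ge> 0"
  unfolding sig_marg_def signaling_def by (simp add: sum_nonneg)

lemma sig_marg_eq_0_imp_eq_0:
  assumes "finite Th" "\<forall>t\<in>Th. p t > 0" "signaling Th S sigma" "s \<in> S" "sig_marg Th p sigma s = 0"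
  shows "sig_marg Th q sigma s = 0"
proof -
  have "\<forall>t\<in>Th. p t * sigma s t = 0"
    using assms sum_nonneg_eq_0_iff[of Th "\<lambda>t. p t * sigma s t"]
    unfolding sig_marg_def signaling_def by (simp add: less_imp_le)
  then have "\<forall>t\<in>Th. sigma s t = 0" using assms(2) by (metis less_irrefl mult_eq_0_iff)
  then show ?thesis unfolding sig_marg_def by simp
qed

lemma posterior_increasing_on_support:
  assumes "finite Th" "\<forall>t\<in>Th. p t \<ge> 0" "signaling Th S sigma" "MLRP Th S sigma"
    and G: "upper_set Th G"
  shows "increasing_on {s\<in>S. sig_marg Th p sigma s \<noteq> 0} (posterior Th p sigma G)"
  unfolding increasing_on_def
proof (intro ballI impI)
  fix s1 s2 assume s: "s1 \<in> {s\<in>S. sig_marg Th p sigma s \<noteq> 0}" "s2 \<in> {s\<in>S. sig_marg Th p sigma s \<noteq> 0}"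
    and "s1 \<le> s2"
  have "G \<subseteq> Th" using G unfolding upper_set_def by blast
  define A where "A s = (\<Sum>t\<in>G. p t * sigma s t)" for s
  define B where "B s = (\<Sum>t\<in>Th - G. p t * sigma s t)" for s
  have marg: "sig_marg Th p sigma s = A s + B s" for s
    unfolding sig_marg_def A_def B_def using sum.subset_diff[OF \<open>G \<subseteq> Th\<close> assms(1)] by (simp add: add.commute)
  have "A s1 * B s2 \<le> A s2 * B s1"
  proof (cases "s1 = s2")
    case False
    with \<open>s1 \<le> s2\<close> have "s1 < s2" by simp
    show ?thesis unfolding A_def B_def
    proof (rule sum_mult_sum_le)
      fix t t' assume t: "t \<in> G" "t' \<in> Th - G"
      then have "t' < t" using G unfolding upper_set_def by (metis Diff_iff linorder_neqE_linordered_idom)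
      then have "sigma s2 t' * sigma s1 t \<le> sigma s2 t * sigma s1 t'"
        using assms(4) s \<open>s1 < s2\<close> t \<open>G \<subseteq> Th\<close> unfolding MLRP_def by blast
      moreover have "p t * p t' \<ge> 0" using assms(2) t \<open>G \<subseteq> Th\<close> by auto
      ultimately have "p t * p t' * (sigma s2 t' * sigma s1 t) \<le> p t * p t' * (sigma s2 t * sigma s1 t')"
        by (rule mult_left_mono)
      then show "p t * sigma s1 t * (p t' * sigma s2 t') \<le> p t * sigma s2 t * (p t' * sigma s1 t')"
        by (simp add: algebra_simps)
    qed
  qed simp
  moreover have "A s1 + B s1 > 0" "A s2 + B s2 > 0"
    using s sig_marg_nonneg[OF assms(2,3)] unfolding marg by (auto simp: order_le_less)
  ultimately have "A s1 / (A s1 + B s1) \<le> A s2 / (A s2 + B s2)"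
    by (simp add: divide_simps algebra_simps)
  then show "posterior Th p sigma G s1 \<le> posterior Th p sigma G s2"
    unfolding posterior_def marg A_def .
qed

lemma lr_ge_imp_rv_lr_ge:
  assumes "finite Th" "\<forall>t\<in>Th. p t > 0" "lr_ge_on Th q p"
    and S: "signaling Th S sigma" "MLRP Th S sigma"
    and R: "increasing_on {s\<in>S. sig_marg Th p sigma s \<noteq> 0} R"
  shows "rv_lr_ge S R (sig_marg Th q sigma) (sig_marg Th p sigma)"
proof (rule rv_lr_ge_if_increasing_on_support[OF _ _ _ R])
  show "finite S" using S(1) unfolding signaling_def by blast
  show "lr_ge_on S (sig_marg Th q sigma) (sig_marg Th p sigma)"
    using MLRP_lr_ge_sig_marg[OF assms(3) S(2)] .
  show "\<forall>s\<in>S. sig_marg Th p sigma s = 0 \<longrightarrow> sig_marg Th q sigma s = 0"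
    using sig_marg_eq_0_imp_eq_0[OF assms(1,2) S(1)] by blast
qed

lemma lr_ge_imp_rv_lr_ge_increasing:
  assumes "finite Th" "\<forall>t\<in>Th. p t > 0" "lr_ge_on Th q p"
    and "signaling Th S sigma" "MLRP Th S sigma" "increasing_on S R"
  shows "rv_lr_ge S R (sig_marg Th q sigma) (sig_marg Th p sigma)"
proof -
  have "increasing_on {s\<in>S. sig_marg Th p sigma s \<noteq> 0} R"
    using assms(6) by (rule increasing_on_subset) auto
  then show ?thesis by (rule lr_ge_imp_rv_lr_ge[OF assms(1-5)])
qed

lemma lr_ge_imp_monotonic_optimistic:
  assumes "finite Th" "\<forall>t\<in>Th. p t > 0" "lr_ge_on Th q p"
  shows "monotonic_optimistic Th p q"
  unfolding monotonic_optimistic_def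
  using lr_ge_imp_rv_lr_ge[OF assms] posterior_increasing_on_support[OF assms(1)] assms(2)
  by (simp add: less_imp_le)

definition identity_channel :: "real \<Rightarrow> real \<Rightarrow> real" where
  "identity_channel s t = (if s = t then 1 else 0)"

lemma signaling_identity_channel: "finite Th \<Longrightarrow> signaling Th Th identity_channel"
  unfolding signaling_def identity_channel_def by simp

lemma MLRP_identity_channel: "MLRP Th Th identity_channel"
  unfolding MLRP_def identity_channel_def by auto

lemma sig_marg_identity_channel: "finite Th \<Longrightarrow> s \<in> Th \<Longrightarrow> sig_marg Th f identity_channel s = f s"
  unfolding sig_marg_def identity_channel_def by (simp add: if_distrib cong: if_cong)

lemma lr_ge_if_rv_lr_ge_identity_channel:
  assumes "finite Th" "rv_lr_ge Th id (sig_marg Th q identity_channel) (sig_marg Th p identity_channel)"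
  shows "lr_ge_on Th q p"
  unfolding lr_ge_on_def
proof (intro ballI impI)
  fix u v assume "u \<in> Th" "v \<in> Th" "u < v"
  with rv_lr_ge_singleton_levels[OF assms(2)]
  show "q u * p v \<le> q v * p u" by (simp add: sig_marg_identity_channel[OF assms(1)])
qed

(* Only u and v emit the noisy signals 2 and 3; their posteriors of the upper set above u lie
   strictly between 0 and 1 and so are separated from those of the deterministic signals 1 and 4. *)
definition pair_test_channel :: "real \<Rightarrow> real \<Rightarrow> real \<Rightarrow> real \<Rightarrow> real" where
  "pair_test_channel u v s t =
    (if t < u then (if s = 1 then 1 else 0)
     else if t = u then (if s = 2 then 3/4 else if s = 3 then 1/4 else 0)
     else if t = v then (if s = 2 then 1/4 else if s = 3 then 3/4 else 0)
     else (if s = 4 then 1 else 0))"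

lemma signaling_pair_test_channel: "signaling Th {1, 2, 3, 4} (pair_test_channel u v)"
  unfolding signaling_def pair_test_channel_def by auto

context
  fixes Th :: "real set" and u v :: real
  assumes "finite Th" and uv: "u \<in> Th" "v \<in> Th" "u < v" and consecutive: "\<forall>t\<in>Th. \<not> (u < t \<and> t < v)"
begin

private lemma states_cases: "t \<in> Th \<Longrightarrow> t < u \<or> t = u \<or> t = v \<or> v < t"
  using consecutive by force

lemma MLRP_pair_test_channel: "MLRP Th {1, 2, 3, 4} (pair_test_channel u v)"
  unfolding MLRP_def
proof (intro ballI impI)
  fix s s' t t' :: real assume "s \<in> {1, 2, 3, 4}" "s' \<in> {1, 2, 3, 4}" "t \<in> Th" "t' \<in> Th" "s < s'" "t < t'"
  then show "pair_test_channel u v s' t * pair_test_channel u v s t'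
      \<le> pair_test_channel u v s' t' * pair_test_channel u v s t"
    using states_cases[of t] states_cases[of t'] uv(3) unfolding pair_test_channel_def by auto
qed

lemma sum_pair_test_states:
  assumes "finite A" "A \<subseteq> Th" "v \<in> A" "\<forall>t\<in>A. f t \<noteq> 0 \<longrightarrow> t = u \<or> t = v"
  shows "sum f A = (if u \<in> A then f u else 0) + f v"
proof -
  have "sum f A = sum f (A \<inter> {u, v})"
    using assms(1,4) by (intro sum.mono_neutral_right) auto
  then show ?thesis using assms(3) uv(3) by (auto simp: Int_insert_right)
qed

lemma sig_marg_pair_test_channel:
  "sig_marg Th f (pair_test_channel u v) 2 = 3/4 * f u + 1/4 * f v"
  "sig_marg Th f (pair_test_channel u v) 3 = 1/4 * f u + 3/4 * f v"
  unfolding sig_marg_def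
  by (subst sum_pair_test_states[OF \<open>finite Th\<close> subset_refl uv(2)];
      use uv states_cases in \<open>force simp: pair_test_channel_def\<close>)+

lemma posterior_pair_test_channel:
  defines "G \<equiv> {t\<in>Th. v \<le> t}"
  shows "posterior Th p (pair_test_channel u v) G 1 = 0"
    and "posterior Th p (pair_test_channel u v) G 2 = (1/4 * p v) / (3/4 * p u + 1/4 * p v)"
    and "posterior Th p (pair_test_channel u v) G 3 = (3/4 * p v) / (1/4 * p u + 3/4 * p v)"
    and "posterior Th p (pair_test_channel u v) G 4 \<in> {0, 1}"
proof -
  have G: "finite G" "G \<subseteq> Th" "v \<in> G" "u \<notin> G" using \<open>finite Th\<close> uv unfolding G_def by auto
  show "posterior Th p (pair_test_channel u v) G 1 = 0"
    unfolding posterior_def using uv(3) by (simp add: G_def pair_test_channel_def)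
  have "(\<Sum>t\<in>G. p t * pair_test_channel u v s t) = (if s = 2 then 1/4 else 3/4) * p v"
    if "s \<in> {2, 3}" for s
    using that by (subst sum_pair_test_states[OF G(1-3)]) (use G uv in \<open>auto simp: pair_test_channel_def\<close>)
  then show "posterior Th p (pair_test_channel u v) G 2 = (1/4 * p v) / (3/4 * p u + 1/4 * p v)"
    "posterior Th p (pair_test_channel u v) G 3 = (3/4 * p v) / (1/4 * p u + 3/4 * p v)"
    unfolding posterior_def sig_marg_pair_test_channel by simp_all
  have "(\<Sum>t\<in>G. p t * pair_test_channel u v 4 t) = sig_marg Th p (pair_test_channel u v) 4"
    unfolding sig_marg_def
    by (intro sum.mono_neutral_left[OF \<open>finite Th\<close> G(2)])
      (use states_cases uv(3) in \<open>force simp: G_def pair_test_channel_def\<close>)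
  then show "posterior Th p (pair_test_channel u v) G 4 \<in> {0, 1}"
    unfolding posterior_def by simp
qed

lemma monotonic_optimistic_imp_lr_ge_consecutive:
  assumes "monotonic_optimistic Th p q" "\<forall>t\<in>Th. p t > 0"
  shows "q u * p v \<le> q v * p u"
proof -
  define G where "G = {t\<in>Th. v \<le> t}"
  let ?Q = "posterior Th p (pair_test_channel u v) G"
  have "upper_set Th G" unfolding upper_set_def G_def by auto
  then have "rv_lr_ge {1, 2, 3, 4} ?Q (sig_marg Th q (pair_test_channel u v)) (sig_marg Th p (pair_test_channel u v))"
    using assms(1) signaling_pair_test_channel MLRP_pair_test_channel
    unfolding monotonic_optimistic_def by blast
  moreover have "p u > 0" "p v > 0" using assms(2) uv by auto
  then have "0 < ?Q 2" "?Q 2 < ?Q 3" "?Q 3 < 1"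
    unfolding G_def posterior_pair_test_channel by (simp_all add: field_simps)
  moreover have "?Q 1 = 0" "?Q 4 \<in> {0, 1}"
    unfolding G_def using posterior_pair_test_channel by simp_all
  ultimately have "sig_marg Th q (pair_test_channel u v) 2 * sig_marg Th p (pair_test_channel u v) 3
      \<le> sig_marg Th q (pair_test_channel u v) 3 * sig_marg Th p (pair_test_channel u v) 2"
    by (intro rv_lr_ge_singleton_levels) auto
  then show ?thesis unfolding sig_marg_pair_test_channel by (simp add: algebra_simps)
qed

end

lemma monotonic_optimistic_imp_lr_ge:
  assumes "finite Th" "\<forall>t\<in>Th. p t > 0" "monotonic_optimistic Th p q"
  shows "lr_ge_on Th q p"
proof -
  have "increasing_on Th (\<lambda>t. q t / p t)"
  proof (rule increasing_on_if_consecutive[OF assms(1)])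
    fix u v assume "u \<in> Th" "v \<in> Th" "u < v" "\<forall>t\<in>Th. \<not> (u < t \<and> t < v)"
    with monotonic_optimistic_imp_lr_ge_consecutive[OF assms(1) this assms(3,2)] assms(2)
    show "q u / p u \<le> q v / p v" by (simp add: divide_simps mult.commute)
  qed
  then show ?thesis using lr_ge_on_iff_increasing_ratio[OF assms(2)] by blast
qed

theorem proposition4:
  fixes Th :: "real set" and p q :: "real \<Rightarrow> real"
  assumes "finite Th"
    and "prob_on Th p" and "prob_on Th q"
    and "\<forall>t\<in>Th. p t > 0"
  shows "(monotonic_optimistic Th p q \<longleftrightarrow> monotonic_strengthening Th p q)
    \<and> (lr_ge_on Th q p \<longleftrightarrow> monotonic_strengthening Th p q)
    \<and> ((\<forall>S sigma. signaling Th S sigma \<longrightarrow> MLRP Th S sigma \<longrightarrow>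
          rv_lr_ge S id (sig_marg Th q sigma) (sig_marg Th p sigma))
        \<longleftrightarrow> monotonic_strengthening Th p q)
    \<and> ((\<forall>S sigma R. signaling Th S sigma \<longrightarrow> MLRP Th S sigma \<longrightarrow> increasing_on S R \<longrightarrow>
          rv_lr_ge S R (sig_marg Th q sigma) (sig_marg Th p sigma))
        \<longleftrightarrow> monotonic_strengthening Th p q)"
proof -
  have strengthening: "monotonic_strengthening Th p q \<longleftrightarrow> lr_ge_on Th q p"
    using monotonic_strengthening_iff_lr_ge[OF assms] .
  have optimistic: "monotonic_optimistic Th p q \<longleftrightarrow> lr_ge_on Th q p"
    using lr_ge_imp_monotonic_optimistic[OF assms(1,4)] monotonic_optimistic_imp_lr_ge[OF assms(1,4)] by blast
  have lr_imp_increasing: "\<forall>S sigma R. signaling Th S sigma \<longrightarrow> MLRP Th S sigma \<longrightarrow> increasing_on S R \<longrightarrow>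
      rv_lr_ge S R (sig_marg Th q sigma) (sig_marg Th p sigma)" (is ?increasing)
    if "lr_ge_on Th q p"
    using lr_ge_imp_rv_lr_ge_increasing[OF assms(1,4) that] by blast
  have increasing_imp_identity: "\<forall>S sigma. signaling Th S sigma \<longrightarrow> MLRP Th S sigma \<longrightarrow>
      rv_lr_ge S id (sig_marg Th q sigma) (sig_marg Th p sigma)" (is ?identity)
    if ?increasing
    using that[rule_format, OF _ _ increasing_on_id] by blast
  have identity_imp_lr: "lr_ge_on Th q p" if ?identity
    using that[rule_format, OF signaling_identity_channel[OF assms(1)] MLRP_identity_channel]
    by (rule lr_ge_if_rv_lr_ge_identity_channel[OF assms(1)])
  have "?identity \<longleftrightarrow> lr_ge_on Th q p"
    by (rule iffI[OF identity_imp_lr increasing_imp_identity[OF lr_imp_increasing]])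
  moreover have "?increasing \<longleftrightarrow> lr_ge_on Th q p"
    by (rule iffI[OF identity_imp_lr[OF increasing_imp_identity] lr_imp_increasing])
  ultimately show ?thesis
    unfolding strengthening optimistic by simp
qed

end
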